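(* Let $X$ be a locally compact Hausdorff space, $F:X\multimap X$ a discrete multivalued dynamical system, and $N$ an isolating block with respect to $F$. Let $U$ be an open neighborhood of $F(N)\cap F^{-1}(N)\cap N$ with $\operatorname{cl}U\subset\operatorname{int}N$. Put $P_1:=(F(N)\cap N)\cup\operatorname{cl}U$ and $P_2:=F(N)\cap\operatorname{bd}N$. Then $P=(P_1,P_2)$ is a weak index pair in $N$.
   Context: A multivalued map $F:X\multimap Y$ assigns to each $x\in X$ a subset $F(x)\subset Y$; $F(A)=\bigcup_{x\in A}F(x)$; $F^{-1}(B)=\{x: F(x)\cap B\neq\emptyset\}$. A discrete multivalued dynamical system (dmds) on $X$ is a usc map $F:X\times\mathbb{Z}\multimap X$ with compact values such that $F(x,0)=\{x\}$; $F(F(x,n),m)=F(x,n+m)$ whenever $nm\ge0$; and $y\in F(x,-1)\iff x\in F(y,1)$; it is identified with its generator $F=F(\cdot,1)$. A solution for $F$ through $x$ on an interval $I\ni 0$ of $\mathbb{Z}$ is $\sigma:I\to X$ with $\sigma(0)=x$, $\sigma(n+1)\in F(\sigma(n))$. For $N\subset X$, $\operatorname{Inv}N$ is the set of $x\in N$ admitting a solution $\sigma:\mathbb{Z}\to N$ through $x$. A compact $N$ is an isolating block if $N\cap F(N)\cap F^{-1}(N)\subset\operatorname{int}N$. The $F$-boundary of $A\subset X$ is $\operatorname{bd}_F A:=\operatorname{cl}A\cap\operatorname{cl}(F(A)\setminus A)$. A pair $P=(P_1,P_2)$ of compact sets $P_2\subset P_1\subset N$ is a weak index pair in $N$ if (a)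 $F(P_i)\cap N\subset P_i$ for $i=1,2$; (b) $\operatorname{bd}_F P_1\subset P_2$; (c) $\operatorname{Inv}N\subset\operatorname{int}(P_1\setminus P_2)$; (d) $P_1\setminus P_2\subset\operatorname{int}N$. *)

theory Defs
  imports "HOL-Analysis.Analysis"
begin

text \<open>Multivalued maps are modelled as set-valued functions. The ambient space X is the
  whole type 'a (a topological space).\<close>

definition mimage :: "('a \<Rightarrow> 'b set) \<Rightarrow> 'a set \<Rightarrow> 'b set" where
  "mimage F A = (\<Union>x\<in>A. F x)"

definition mpreimage :: "('a \<Rightarrow> 'b set) \<Rightarrow> 'b set \<Rightarrow> 'a set" where
  "mpreimage F B = {x. F x \<inter> B \<noteq> {}}"

definition usc_map :: "('a::topological_space \<Rightarrow> 'b::topological_space set) \<Rightarrow> bool" where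
  "usc_map F \<longleftrightarrow> (\<forall>V. open V \<longrightarrow> open {x. F x \<subseteq> V})"

definition dmds :: "('a::topological_space \<Rightarrow> int \<Rightarrow> 'a set) \<Rightarrow> bool" where
  "dmds F \<longleftrightarrow>
     usc_map (\<lambda>p. F (fst p) (snd p)) \<and>
     (\<forall>x n. compact (F x n)) \<and>
     (\<forall>x. F x 0 = {x}) \<and>
     (\<forall>x n m. n * m \<ge> 0 \<longrightarrow> mimage (\<lambda>y. F y m) (F x n) = F x (n + m)) \<and>
     (\<forall>x y. y \<in> F x (-1) \<longleftrightarrow> x \<in> F y 1)"

definition gen :: "('a \<Rightarrow> int \<Rightarrow> 'a set) \<Rightarrow> 'a \<Rightarrow> 'a set" where
  "gen F = (\<lambda>x. F x 1)"

definition Inv :: "('a \<Rightarrow> 'a set) \<Rightarrow> 'a set \<Rightarrow> 'a set" where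
  "Inv G N = {x \<in> N. \<exists>\<sigma>::int \<Rightarrow> 'a. \<sigma> 0 = x \<and> (\<forall>n. \<sigma> n \<in> N) \<and>
                          (\<forall>n. \<sigma> (n + 1) \<in> G (\<sigma> n))}"

definition isolating_block :: "('a::topological_space \<Rightarrow> 'a set) \<Rightarrow> 'a set \<Rightarrow> bool" where
  "isolating_block G N \<longleftrightarrow> compact N \<and>
     N \<inter> mimage G N \<inter> mpreimage G N \<subseteq> interior N"

definition F_boundary :: "('a::topological_space \<Rightarrow> 'a set) \<Rightarrow> 'a set \<Rightarrow> 'a set" where
  "F_boundary G A = closure A \<inter> closure (mimage G A - A)"

definition weak_index_pair ::
  "('a::topological_space \<Rightarrow> 'a set) \<Rightarrow> 'a set \<Rightarrow> 'a set \<Rightarrow> 'a set \<Rightarrow> bool" where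
  "weak_index_pair G N P1 P2 \<longleftrightarrow>
     compact P1 \<and> compact P2 \<and> P2 \<subseteq> P1 \<and> P1 \<subseteq> N \<and>
     mimage G P1 \<inter> N \<subseteq> P1 \<and> mimage G P2 \<inter> N \<subseteq> P2 \<and>
     F_boundary G P1 \<subseteq> P2 \<and>
     Inv G N \<subseteq> interior (P1 - P2) \<and>
     P1 - P2 \<subseteq> interior N"

end

theory Submission
  imports Defs
begin

text \<open>Each of the four axioms follows from the isolating-block property, the compactness of
  \<open>F(N)\<close> and \<open>N\<close>, and two simple observations: a point of \<open>F(N) \<inter> bd N\<close> cannot be mapped back
  into \<open>N\<close>, since it would then lie in \<open>N \<inter> F(N) \<inter> F\<^sup>-\<^sup>1(N) \<subseteq> int N\<close>; and every point of
  \<open>Inv N\<close> lies in \<open>F(N) \<inter> F\<^sup>-\<^sup>1(N) \<inter> N \<subseteq> U\<close>, where \<open>U\<close> is an open subset of \<open>P\<^sub>1 - P\<^sub>2\<close>.\<close>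

lemma mimage_mono: "A \<subseteq> B \<Longrightarrow> mimage G A \<subseteq> mimage G B"
  unfolding mimage_def by blast

lemma compact_mimage:
  assumes usc: "usc_map G" and compact_values: "\<And>x. compact (G x)" and K: "compact K"
  shows "compact (mimage G K)"
proof (rule compactI)
  fix C assume open_C: "\<forall>t\<in>C. open t" and cover: "mimage G K \<subseteq> \<Union>C"
  have "\<exists>D. D \<subseteq> C \<and> finite D \<and> G x \<subseteq> \<Union>D" if "x \<in> K" for x
  proof -
    have "G x \<subseteq> \<Union>C" using cover that unfolding mimage_def by auto
    then show ?thesis using compactE[OF compact_values[of x]] open_C by metis
  qed
  then obtain D where D: "\<And>x. x \<in> K \<Longrightarrow> D x \<subseteq> C \<and> finite (D x) \<and> G x \<subseteq> \<Union>(D x)"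
    by metis
  define W where "W x = {y. G y \<subseteq> \<Union>(D x)}" for x
  have "open (W x)" if "x \<in> K" for x
  proof -
    have "open (\<Union>(D x))" using D[OF that] open_C by blast
    then show ?thesis using usc unfolding W_def usc_map_def by blast
  qed
  moreover have "K \<subseteq> (\<Union>x\<in>K. W x)" using D unfolding W_def by auto
  ultimately obtain T where T: "T \<subseteq> K" "finite T" "K \<subseteq> (\<Union>x\<in>T. W x)"
    using compactE_image[OF K] by metis
  show "\<exists>C'. C' \<subseteq> C \<and> finite C' \<and> mimage G K \<subseteq> \<Union>C'"
  proof (intro exI conjI)
    show "\<Union>(D ` T) \<subseteq> C" using T D by blast
    show "finite (\<Union>(D ` T))" using T D by (meson finite_UN_I subsetD)
    show "mimage G K \<subseteq> \<Union>(\<Union>(D ` T))" using T(3) unfolding mimage_def W_def by blast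
  qed
qed

lemma dmds_usc_map_gen:
  assumes "dmds F"
  shows "usc_map (gen F)"
  unfolding usc_map_def
proof (intro allI impI)
  fix V :: "'a set" assume "open V"
  have "usc_map (\<lambda>p. F (fst p) (snd p))"
    using assms unfolding dmds_def by (rule conjunct1)
  then have "open {p. F (fst p) (snd p) \<subseteq> V}"
    using \<open>open V\<close> unfolding usc_map_def by blast
  then have "open ((\<lambda>x. (x, 1::int)) -` {p. F (fst p) (snd p) \<subseteq> V})"
    by (rule open_vimage) (intro continuous_intros)
  moreover have "{x. gen F x \<subseteq> V} = (\<lambda>x. (x, 1::int)) -` {p. F (fst p) (snd p) \<subseteq> V}"
    unfolding gen_def by simp
  ultimately show "open {x. gen F x \<subseteq> V}" by simp
qed

lemma dmds_compact_gen:
  assumes "dmds F"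
  shows "compact (gen F x)"
proof -
  have "\<forall>x n. compact (F x n)"
    using assms unfolding dmds_def by (rule conjunct1[OF conjunct2])
  then show ?thesis unfolding gen_def by blast
qed

lemma Inv_subset_mimage_mpreimage: "Inv G N \<subseteq> mimage G N \<inter> mpreimage G N \<inter> N"
proof
  fix x assume "x \<in> Inv G N"
  then obtain \<sigma> :: "int \<Rightarrow> 'a" where
    \<sigma>: "\<sigma> 0 = x" "\<And>n. \<sigma> n \<in> N" "\<And>n. \<sigma> (n + 1) \<in> G (\<sigma> n)" and "x \<in> N"
    unfolding Inv_def by blast
  have "x \<in> G (\<sigma> (-1))" using \<sigma>(1) \<sigma>(3)[of "-1"] by simp
  then have "x \<in> mimage G N" using \<sigma>(2) unfolding mimage_def by blast
  moreover have "\<sigma> 1 \<in> G x \<inter> N" using \<sigma>(1,2) \<sigma>(3)[of 0] by simp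
  then have "x \<in> mpreimage G N" unfolding mpreimage_def by blast
  ultimately show "x \<in> mimage G N \<inter> mpreimage G N \<inter> N" using \<open>x \<in> N\<close> by blast
qed

lemma isolating_block_frontier_exits:
  fixes G :: "'a::t2_space \<Rightarrow> 'a set"
  assumes "isolating_block G N"
  shows "mimage G (mimage G N \<inter> frontier N) \<inter> N = {}"
proof (rule ccontr)
  assume "mimage G (mimage G N \<inter> frontier N) \<inter> N \<noteq> {}"
  then obtain x y where x: "x \<in> mimage G N" "x \<in> frontier N" and "y \<in> G x" "y \<in> N"
    unfolding mimage_def by blast
  then have "x \<in> mpreimage G N" unfolding mpreimage_def by blast
  moreover have "x \<in> N"
    using assms x(2) compact_imp_closed frontier_subset_closed
    unfolding isolating_block_def by blast
  ultimately have "x \<in> interior N"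
    using assms x(1) unfolding isolating_block_def by blast
  with x(2) show False by (simp add: frontier_def)
qed

lemma F_boundary_subset:
  assumes "closed A" "closed B" "mimage G A - A \<subseteq> B - N"
  shows "F_boundary G A \<subseteq> A \<inter> B - interior N"
proof -
  have "mimage G A - A \<subseteq> B" "mimage G A - A \<subseteq> - N"
    using assms(3) by auto
  then have "closure (mimage G A - A) \<subseteq> closure B" "closure (mimage G A - A) \<subseteq> closure (- N)"
    by (simp_all add: closure_mono)
  then show ?thesis
    using assms(1,2) unfolding F_boundary_def closure_complement by auto
qed

lemma isolating_block_weak_index_pair:
  fixes G :: "'a::t2_space \<Rightarrow> 'a set"
  assumes block: "isolating_block G N" and "compact (mimage G N)"
    and "open U" and "mimage G N \<inter> mpreimage G N \<inter> N \<subseteq> U" and "closure U \<subseteq> interior N"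
  shows "weak_index_pair G N ((mimage G N \<inter> N) \<union> closure U) (mimage G N \<inter> frontier N)"
proof -
  define P1 where "P1 = (mimage G N \<inter> N) \<union> closure U"
  define P2 where "P2 = mimage G N \<inter> frontier N"
  have "compact N" using block unfolding isolating_block_def by blast
  then have "closed N" by (rule compact_imp_closed)
  then have frontier_N: "frontier N = N - interior N" by (simp add: frontier_def)
  have "closure U \<subseteq> N" using assms(5) interior_subset by blast
  then have "compact (closure U)"
    by (metis \<open>compact N\<close> closed_closure compact_Int_closed inf.absorb2)
  have "compact P1" unfolding P1_def
    using \<open>compact (mimage G N)\<close> \<open>closed N\<close> \<open>compact (closure U)\<close> by blast
  have "compact P2" unfolding P2_def
    using \<open>compact (mimage G N)\<close> by (simp add: compact_Int_closed)
  have "P1 \<subseteq> N" "P2 \<subseteq> P1"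
    using \<open>closure U \<subseteq> N\<close> unfolding P1_def P2_def frontier_N by blast+
  have "mimage G P1 \<subseteq> mimage G N" using \<open>P1 \<subseteq> N\<close> by (rule mimage_mono)
  then have "mimage G P1 \<inter> N \<subseteq> P1" and "mimage G P1 - P1 \<subseteq> mimage G N - N"
    unfolding P1_def by blast+
  then have "F_boundary G P1 \<subseteq> P2"
    using F_boundary_subset[of P1 "mimage G N" G N] \<open>compact P1\<close> \<open>compact (mimage G N)\<close>
      \<open>P1 \<subseteq> N\<close>
    unfolding P2_def frontier_N by (auto dest: compact_imp_closed)
  have "mimage G P2 \<inter> N \<subseteq> P2"
    using isolating_block_frontier_exits[OF block] unfolding P2_def by blast
  have "U \<subseteq> P1 - P2"
    using assms(5) closure_subset[of U] unfolding P1_def P2_def frontier_N by blast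
  then have "Inv G N \<subseteq> interior (P1 - P2)"
    using Inv_subset_mimage_mpreimage[of G N] assms(4) interior_maximal[OF _ assms(3)] by blast
  have "P1 - P2 \<subseteq> interior N"
    using assms(5) unfolding P1_def P2_def frontier_N by blast
  show ?thesis
    unfolding weak_index_pair_def P1_def[symmetric] P2_def[symmetric]
    by (intro conjI) fact+
qed

theorem theorem4:
  fixes F :: "'a::t2_space \<Rightarrow> int \<Rightarrow> 'a set"
    and N U :: "'a set"
  assumes "locally_compact_space (euclidean :: 'a topology)"
    and "dmds F"
    and "isolating_block (gen F) N"
    and "open U"
    and "mimage (gen F) N \<inter> mpreimage (gen F) N \<inter> N \<subseteq> U"
    and "closure U \<subseteq> interior N"
  shows "weak_index_pair (gen F) N
           ((mimage (gen F) N \<inter> N) \<union> closure U)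
           (mimage (gen F) N \<inter> frontier N)"
proof -
  have "compact N" using assms(3) unfolding isolating_block_def by blast
  then have "compact (mimage (gen F) N)"
    using compact_mimage dmds_usc_map_gen[OF assms(2)] dmds_compact_gen[OF assms(2)] by blast
  then show ?thesis
    using isolating_block_weak_index_pair assms(3-6) by blast
qed

end
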